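(* Let $\nu\in(0,1]$ and $\alpha\in(0,2]$. Then $$L_{\alpha,\nu}\stackrel{d}{=} L_{\alpha}\cdot Z_{\nu,1}^{-1/\alpha},$$ where $L_\alpha$ and $Z_{\nu,1}$ are independent. That is, for such parameters the generalized Linnik distribution is a scale mixture of ordinary Linnik distributions.
   Context: $\stackrel{d}{=}$ denotes equality in distribution. For $\alpha\in(0,2]$, $\nu>0$, $L_{\alpha,\nu}$ denotes a random variable with characteristic function $(1+|t|^{\alpha})^{-\nu}$, $t\in\mathbb{R}$, and $L_\alpha=L_{\alpha,1}$ (Linnik distribution, characteristic function $(1+|t|^\alpha)^{-1}$). For $r\in(0,1)$, $Z_{r,1}$ denotes the random variable $Z_{r,1}=(G_{r,1}+G_{1-r,1})/G_{r,1}$, where $G_{r,1}$, $G_{1-r,1}$ are independent gamma random variables with shape parameters $r$, $1-r$ and scale parameter $1$ (density $x^{s-1}e^{-x}/\Gamma(s)$, $x>0$, for shape $s$); equivalently $Z_{r,1}$ has density $\frac{1}{\Gamma(1-r)\Gamma(r)}\cdot\frac{\mathbf{1}(z\ge1)}{(z-1)^r z}$. For $r=1$, $Z_{1,1}\equiv1$. *)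

theory Defs
  imports "HOL-Probability.Probability"
begin

definition linnik_cf :: "real \<Rightarrow> real \<Rightarrow> real \<Rightarrow> complex" where
  "linnik_cf \<alpha> \<nu> t = complex_of_real ((1 + \<bar>t\<bar> powr \<alpha>) powr (- \<nu>))"

text \<open>Density of Z_{r,1} for 0 < r < 1.\<close>
definition Z_density :: "real \<Rightarrow> real \<Rightarrow> real" where
  "Z_density r z = (if 1 < z then 1 / (Gamma (1 - r) * Gamma r) * (1 / ((z - 1) powr r * z)) else 0)"

end

theory Submission imports Defs begin

text \<open>
  Conditionally on \<open>Z = z\<close>, the variable \<open>L \<cdot> z powr (-1/\<alpha>)\<close> has characteristic function
  \<open>(1 + \<bar>t\<bar>\<^sup>\<alpha>/z)\<^sup>-\<^sup>1 = z/(z + s)\<close> with \<open>s = \<bar>t\<bar>\<^sup>\<alpha>\<close>. Averaging over \<open>Z\<close> and substituting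
  \<open>w = z - 1\<close> turns the mixture into the Stieltjes transform
  \<open>\<integral>\<^sub>0\<^sup>\<infinity> w\<^sup>-\<^sup>\<nu> / (w + 1 + s) dw = \<Gamma>(\<nu>) \<Gamma>(1-\<nu>) (1 + s)\<^sup>-\<^sup>\<nu>\<close>, which the normalising constant
  of \<open>Z\<close> reduces to \<open>(1 + s)\<^sup>-\<^sup>\<nu>\<close>, the characteristic function of \<open>L\<^sub>\<alpha>\<^sub>,\<^sub>\<nu>\<close>. Levy's
  uniqueness theorem concludes. The Stieltjes transform is computed by writing
  \<open>1/(w + a) = \<integral>\<^sub>0\<^sup>\<infinity> exp (-(w + a) x) dx\<close> and exchanging the order of integration, so that
  both remaining integrals are Gamma integrals. The hypothesis \<open>\<alpha> \<le> 2\<close> only guarantees that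
  the Linnik laws exist; the computation does not need it.
\<close>

lemma nn_integral_gamma_kernel:
  fixes p c :: real
  assumes p: "0 < p" and c: "0 < c"
  shows "(\<integral>\<^sup>+t. ennreal (indicator {0<..} t * t powr (p - 1) * exp (- c * t)) \<partial>lborel)
       = ennreal (Gamma p * c powr (- p))"
proof -
  let ?k = "\<lambda>t::real. indicator {0<..} t * t powr (p - 1) * exp (- t)"
  have k_eq: "?k = (\<lambda>t. if t \<in> {0..} then t powr (p - 1) / exp t else 0)"
    by (auto simp: fun_eq_iff indicator_def exp_minus field_simps)
  have "(?k has_integral Gamma p) UNIV"
    unfolding k_eq has_integral_restrict_UNIV by (rule Gamma_integral_real[OF p])
  then have gamma: "(\<integral>\<^sup>+t. ennreal (?k t) \<partial>lborel) = ennreal (Gamma p)"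
    by (intro nn_integral_has_integral_lborel) auto
  let ?f = "\<lambda>t. ennreal (indicator {0<..} t * t powr (p - 1) * exp (- c * t))"
  have "(\<integral>\<^sup>+t. ?f t \<partial>lborel) = \<bar>1/c\<bar> * (\<integral>\<^sup>+x. ?f (0 + (1/c) * x) \<partial>lborel)"
    by (rule nn_integral_real_affine) (use c in auto)
  also have "(\<lambda>x. ?f (0 + (1/c) * x)) = (\<lambda>x. ennreal (c powr (1 - p)) * ennreal (?k x))"
    using c by (auto simp: fun_eq_iff indicator_def powr_divide powr_diff ennreal_mult[symmetric]
        field_simps zero_less_mult_iff)
  also have "(\<integral>\<^sup>+x. ennreal (c powr (1 - p)) * ennreal (?k x) \<partial>lborel) = ennreal (c powr (1 - p)) * ennreal (Gamma p)"
    by (subst nn_integral_cmult) (auto simp: gamma)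
  also have "\<bar>1/c\<bar> * (ennreal (c powr (1 - p)) * ennreal (Gamma p)) = ennreal (Gamma p * c powr (- p))"
    using c p by (auto simp: ennreal_mult[symmetric] powr_diff Gamma_real_pos field_simps powr_minus)
  finally show ?thesis .
qed

lemma nn_integral_stieltjes_powr:
  fixes \<nu> a :: real
  assumes \<nu>: "0 < \<nu>" "\<nu> < 1" and a: "0 < a"
  shows "(\<integral>\<^sup>+w. ennreal (indicator {0<..} w * w powr (- \<nu>) / (w + a)) \<partial>lborel)
       = ennreal (Gamma \<nu> * Gamma (1 - \<nu>) * a powr (- \<nu>))"
proof -
  define F where "F = (\<lambda>w x::real. ennreal (indicator {0<..} w * w powr (- \<nu>))
                                   * ennreal (indicator {0<..} x * exp (- (w + a) * x)))"
  have F_measurable: "case_prod F \<in> borel_measurable (lborel \<Otimes>\<^sub>M lborel)"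
    unfolding F_def by measurable
  have inner_x: "(\<integral>\<^sup>+x. F w x \<partial>lborel) = ennreal (indicator {0<..} w * w powr (- \<nu>) / (w + a))" for w
  proof (cases "0 < w")
    case True
    have "(\<integral>\<^sup>+x. F w x \<partial>lborel)
        = ennreal (w powr (- \<nu>)) * (\<integral>\<^sup>+x. ennreal (indicator {0<..} x * x powr (1 - 1) * exp (- (w + a) * x)) \<partial>lborel)"
      unfolding F_def using True
      by (subst nn_integral_cmult[symmetric]) (auto intro!: nn_integral_cong simp: indicator_def)
    also have "\<dots> = ennreal (w powr (- \<nu>)) * ennreal (Gamma 1 * (w + a) powr (- 1))"
      using True a by (subst nn_integral_gamma_kernel) auto
    finally show ?thesis
      using True a by (auto simp: ennreal_mult[symmetric] powr_minus_divide divide_simps)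
  qed (simp add: F_def indicator_def)
  have inner_w: "(\<integral>\<^sup>+w. F w x \<partial>lborel)
               = ennreal (Gamma (1 - \<nu>)) * ennreal (indicator {0<..} x * x powr (\<nu> - 1) * exp (- a * x))" for x
  proof (cases "0 < x")
    case True
    have "(\<integral>\<^sup>+w. F w x \<partial>lborel)
        = ennreal (exp (- a * x)) * (\<integral>\<^sup>+w. ennreal (indicator {0<..} w * w powr ((1 - \<nu>) - 1) * exp (- x * w)) \<partial>lborel)"
      unfolding F_def using True
      by (subst nn_integral_cmult[symmetric])
        (auto intro!: nn_integral_cong simp: indicator_def ennreal_mult[symmetric] exp_add[symmetric] algebra_simps)
    also have "\<dots> = ennreal (exp (- a * x)) * ennreal (Gamma (1 - \<nu>) * x powr (- (1 - \<nu>)))"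
      using True \<nu> by (subst nn_integral_gamma_kernel) auto
    finally show ?thesis
      using True \<nu> by (auto simp: ennreal_mult[symmetric] Gamma_real_pos mult_ac)
  qed (simp add: F_def indicator_def)
  have "(\<integral>\<^sup>+w. ennreal (indicator {0<..} w * w powr (- \<nu>) / (w + a)) \<partial>lborel)
      = (\<integral>\<^sup>+w. (\<integral>\<^sup>+x. F w x \<partial>lborel) \<partial>lborel)"
    by (simp add: inner_x)
  also have "\<dots> = (\<integral>\<^sup>+x. (\<integral>\<^sup>+w. F w x \<partial>lborel) \<partial>lborel)"
    using lborel_pair.Fubini'[OF F_measurable] by simp
  also have "\<dots> = ennreal (Gamma (1 - \<nu>)) * ennreal (Gamma \<nu> * a powr (- \<nu>))"
    using \<nu> a nn_integral_gamma_kernel[of \<nu> a] by (simp add: inner_w nn_integral_cmult)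
  finally show ?thesis
    using \<nu> by (auto simp: ennreal_mult[symmetric] Gamma_real_pos mult_ac)
qed

lemma Z_density_nonneg: "0 < r \<Longrightarrow> r < 1 \<Longrightarrow> 0 \<le> Z_density r z"
  unfolding Z_density_def by (auto simp: Gamma_real_pos)

lemma Z_density_measurable [measurable]: "Z_density r \<in> borel_measurable borel"
  unfolding Z_density_def by measurable

lemma integral_Z_density_mixture:
  fixes \<nu> s :: real
  assumes \<nu>: "0 < \<nu>" "\<nu> < 1" and s: "0 \<le> s"
  shows "(\<integral>z. Z_density \<nu> z * (z / (z + s)) \<partial>lborel) = (1 + s) powr (- \<nu>)"
proof -
  define C where "C = 1 / (Gamma (1 - \<nu>) * Gamma \<nu>)"
  have Gamma_pos: "0 < Gamma \<nu>" "0 < Gamma (1 - \<nu>)"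
    using \<nu> by (auto intro: Gamma_real_pos)
  have nonneg: "0 \<le> Z_density \<nu> z * (z / (z + s))" for z
    using s by (cases "1 < z") (auto simp: Z_density_def Gamma_real_pos \<nu>)
  have shifted: "ennreal (Z_density \<nu> (1 + w) * ((1 + w) / (1 + w + s)))
               = ennreal C * ennreal (indicator {0<..} w * w powr (- \<nu>) / (w + (1 + s)))" for w
  proof (cases "0 < w")
    case True
    then have "Z_density \<nu> (1 + w) * ((1 + w) / (1 + w + s)) = C * (w powr (- \<nu>) / (w + (1 + s)))"
      using s Gamma_pos by (simp add: Z_density_def C_def powr_minus divide_simps)
    then show ?thesis
      using True s Gamma_pos by (simp add: C_def ennreal_mult[symmetric])
  qed (simp add: Z_density_def indicator_def)
  have "(\<integral>\<^sup>+z. ennreal (Z_density \<nu> z * (z / (z + s))) \<partial>lborel)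
      = ennreal \<bar>1\<bar> * (\<integral>\<^sup>+w. ennreal (Z_density \<nu> (1 + 1 * w) * ((1 + 1 * w) / ((1 + 1 * w) + s))) \<partial>lborel)"
    by (rule nn_integral_real_affine) auto
  also have "\<dots> = (\<integral>\<^sup>+w. ennreal C * ennreal (indicator {0<..} w * w powr (- \<nu>) / (w + (1 + s))) \<partial>lborel)"
    by (simp only: mult_1 abs_one ennreal_1 shifted)
  also have "\<dots> = ennreal C * ennreal (Gamma \<nu> * Gamma (1 - \<nu>) * (1 + s) powr (- \<nu>))"
    using s by (simp add: nn_integral_cmult nn_integral_stieltjes_powr[OF \<nu>])
  also have "\<dots> = ennreal ((1 + s) powr (- \<nu>))"
    using Gamma_pos by (simp add: C_def ennreal_mult[symmetric])
  finally show ?thesis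
    by (subst integral_eq_nn_integral) (auto simp del: times_divide_eq_right simp: nonneg)
qed

lemma linnik_cf_rescaled:
  fixes z t \<alpha> :: real
  assumes z: "0 < z" and \<alpha>: "0 < \<alpha>"
  shows "linnik_cf \<alpha> 1 (t * z powr (- 1 / \<alpha>)) = complex_of_real (z / (z + \<bar>t\<bar> powr \<alpha>))"
proof -
  have "\<bar>t * z powr (- 1 / \<alpha>)\<bar> = \<bar>t\<bar> * z powr (- 1 / \<alpha>)"
    by (simp only: abs_mult abs_of_nonneg[OF powr_ge_zero])
  then have "\<bar>t * z powr (- 1 / \<alpha>)\<bar> powr \<alpha> = \<bar>t\<bar> powr \<alpha> * z powr ((- 1 / \<alpha>) * \<alpha>)"
    by (simp add: powr_mult powr_powr)
  then have "\<bar>t * z powr (- 1 / \<alpha>)\<bar> powr \<alpha> = \<bar>t\<bar> powr \<alpha> / z"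
    using z \<alpha> by (simp add: powr_minus_divide)
  moreover have "(1 + \<bar>t\<bar> powr \<alpha> / z) powr (- 1) = z / (z + \<bar>t\<bar> powr \<alpha>)"
    using z by (simp add: powr_minus_divide divide_simps add_pos_nonneg)
  ultimately show ?thesis
    by (simp only: linnik_cf_def)
qed

lemma (in prob_space) char_distr_mult_indep:
  assumes [measurable]: "L \<in> borel_measurable M" "Z \<in> borel_measurable M" "h \<in> borel_measurable borel"
    and indep: "indep_var borel L borel Z"
  shows "char (distr M borel (\<lambda>\<omega>. L \<omega> * h (Z \<omega>))) t
       = (\<integral>z. char (distr M borel L) (t * h z) \<partial>distr M borel Z)"
proof -
  let ?PL = "distr M borel L" and ?PZ = "distr M borel Z"
  interpret PP: pair_prob_space ?PL ?PZ
    by (intro pair_prob_space.intro pair_sigma_finite.intro prob_space_imp_sigma_finite prob_space_distr) auto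
  define f where "f = (\<lambda>(l::real) (z::real). iexp (t * (l * h z)))"
  have [measurable]: "case_prod f \<in> borel_measurable (borel \<Otimes>\<^sub>M borel)"
    unfolding f_def by measurable
  have f_integrable: "integrable (?PL \<Otimes>\<^sub>M ?PZ) (case_prod f)"
    by (rule PP.P.integrable_const_bound[where B=1]) (auto simp: f_def norm_exp_i_times measurable_pair_measure)
  have joint: "?PL \<Otimes>\<^sub>M ?PZ = distr M (borel \<Otimes>\<^sub>M borel) (\<lambda>\<omega>. (L \<omega>, Z \<omega>))"
    using indep indep_var_distribution_eq by blast
  have "(\<integral>p. case_prod f p \<partial>distr M (borel \<Otimes>\<^sub>M borel) (\<lambda>\<omega>. (L \<omega>, Z \<omega>)))
      = (\<integral>z. (\<integral>l. f l z \<partial>?PL) \<partial>?PZ)"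
    unfolding joint[symmetric] using PP.integral_snd[OF f_integrable] by simp
  then show ?thesis
    by (simp add: char_def integral_distr f_def mult_ac)
qed

lemma integral_linnik_cf_Z_mixture:
  fixes \<alpha> \<nu> t :: real
  assumes \<nu>: "0 < \<nu>" "\<nu> < 1" and \<alpha>: "0 < \<alpha>"
  shows "(\<integral>z. linnik_cf \<alpha> 1 (t * z powr (- 1 / \<alpha>)) \<partial>density lborel (\<lambda>z. ennreal (Z_density \<nu> z)))
       = linnik_cf \<alpha> \<nu> t"
proof -
  have "(\<integral>z. linnik_cf \<alpha> 1 (t * z powr (- 1 / \<alpha>)) \<partial>density lborel (\<lambda>z. ennreal (Z_density \<nu> z)))
      = (\<integral>z. Z_density \<nu> z *\<^sub>R linnik_cf \<alpha> 1 (t * z powr (- 1 / \<alpha>)) \<partial>lborel)"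
    by (subst integral_density) (auto simp: linnik_cf_def Z_density_nonneg[OF \<nu>])
  also have "\<dots> = (\<integral>z. complex_of_real (Z_density \<nu> z * (z / (z + \<bar>t\<bar> powr \<alpha>))) \<partial>lborel)"
  proof (rule Bochner_Integration.integral_cong[OF refl])
    fix z :: real
    show "Z_density \<nu> z *\<^sub>R linnik_cf \<alpha> 1 (t * z powr (- 1 / \<alpha>))
        = complex_of_real (Z_density \<nu> z * (z / (z + \<bar>t\<bar> powr \<alpha>)))"
    proof (cases "1 < z")
      case True
      then show ?thesis
        using linnik_cf_rescaled[of z \<alpha> t] \<alpha> by (simp add: scaleR_conv_of_real)
    qed (simp add: Z_density_def)
  qed
  also have "\<dots> = linnik_cf \<alpha> \<nu> t"
    unfolding integral_complex_of_real integral_Z_density_mixture[OF \<nu> powr_ge_zero] linnik_cf_def ..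
  finally show ?thesis .
qed

theorem theorem3:
  fixes M :: "'a measure" and X L Z :: "'a \<Rightarrow> real" and \<alpha> \<nu> :: real
  assumes "prob_space M"
    and "0 < \<nu>" and "\<nu> \<le> 1" and "0 < \<alpha>" and "\<alpha> \<le> 2"
    and "X \<in> borel_measurable M" and "L \<in> borel_measurable M" and "Z \<in> borel_measurable M"
    and "\<forall>t. char (distr M borel X) t = linnik_cf \<alpha> \<nu> t"
    and "\<forall>t. char (distr M borel L) t = linnik_cf \<alpha> 1 t"
    and "\<nu> < 1 \<Longrightarrow> distributed M lborel Z (\<lambda>z. ennreal (Z_density \<nu> z))"
    and "\<nu> = 1 \<Longrightarrow> (AE \<omega> in M. Z \<omega> = 1)"
    and "prob_space.indep_var M borel L borel Z"
  shows "distr M borel X = distr M borel (\<lambda>\<omega>. L \<omega> * Z \<omega> powr (- 1 / \<alpha>))"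
proof -
  interpret prob_space M by fact
  note [measurable] = assms(6-8)
  have "char (distr M borel (\<lambda>\<omega>. L \<omega> * Z \<omega> powr (- 1 / \<alpha>))) t = linnik_cf \<alpha> \<nu> t" for t
  proof -
    have "char (distr M borel (\<lambda>\<omega>. L \<omega> * Z \<omega> powr (- 1 / \<alpha>))) t
        = (\<integral>z. linnik_cf \<alpha> 1 (t * z powr (- 1 / \<alpha>)) \<partial>distr M borel Z)"
      using char_distr_mult_indep[of L Z "\<lambda>z. z powr (- 1 / \<alpha>)"] assms(10,13) by simp
    also have "\<dots> = linnik_cf \<alpha> \<nu> t"
    proof (cases "\<nu> = 1")
      case True
      have "(\<integral>z. linnik_cf \<alpha> 1 (t * z powr (- 1 / \<alpha>)) \<partial>distr M borel Z)
          = (\<integral>\<omega>. linnik_cf \<alpha> 1 (t * Z \<omega> powr (- 1 / \<alpha>)) \<partial>M)"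
        by (rule integral_distr) (auto simp: linnik_cf_def)
      also have "\<dots> = (\<integral>\<omega>. linnik_cf \<alpha> 1 t \<partial>M)"
        using assms(12)[OF True] by (intro integral_cong_AE) (auto simp: linnik_cf_def)
      finally show ?thesis
        using True by (simp add: prob_space)
    next
      case False
      then have "\<nu> < 1" using assms(3) by simp
      moreover have "distr M borel Z = distr M lborel Z" by (rule distr_cong) auto
      ultimately show ?thesis
        using assms(2,4,11) integral_linnik_cf_Z_mixture by (simp add: distributed_def)
    qed
    finally show ?thesis .
  qed
  then show ?thesis
    using assms(9) by (intro Levy_uniqueness) auto
qed

end
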